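(* Assume $m=2$, i.e. $\Theta=\{\theta_1,\theta_2\}$, and $\mathcal{W}^{\theta_1}\neq\mathcal{W}^{\theta_2}$. Then there exist distributions $\xi,\eta\in\Delta_1^2$ with $\xi\neq\eta$ and $\xi_1>\eta_1$ such that: (i) for every $\mu\in[0,1]$, with $\varphi_\mu=\mu\varphi^{\theta_1}+(1-\mu)\xi$, one has $\mathcal{W}^{\varphi_\mu}=\mathcal{W}^{\theta_1}$; and (ii) for every $\lambda\in(0,1)$, with $\varphi_\lambda=\lambda\xi+(1-\lambda)\eta$, there exists $f\in\mathcal{W}^{\varphi_\lambda}$ with $f\in\mathcal{F}_{\mathrm{inf}}$.
   Context: Let $\mathcal{G}=(\mathcal{V},\mathcal{E})$ be a finite directed graph with an origin $v_o$ and a destination $v_d$, and let $\mathcal{P}$ be the (finite) set of acyclic directed paths from $v_o$ to $v_d$, $n=|\mathcal{P}|$. The set of feasible path-flows is $\mathcal{H}=\{f\in\mathbb{R}^n_{\ge0}:\sum_{p\in\mathcal{P}}f_p=1\}$. For a path-flow $f$, the flow on edge $e_k$ is $f_{e_k}=\sum_{p\ni e_k}f_p$. There is a finite set of states $\Theta=\{\theta_1,\dots,\theta_m\}$; in each state $\theta_s$ each edge $e_k$ has a known cost function $C^{\theta_s}_{e_k}:\mathbb{R}_{\ge0}\to\mathbb{R}_{\ge0}$ that is continuous and strictly increasing. The cost of path $p$ in state $\theta_s$ is $C^{\theta_s}_p(f)=\sum_{e_k\in p}C^{\theta_s}_{e_k}(f_{e_k})$. For $\varphi\in\Delta_1^m:=\{x\in\mathbb{R}^m_{\ge0}:\sum_i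 x_i=1\}$ the expected cost of path $p$ is $C^\varphi_p(f)=\sum_{s}\varphi_sC^{\theta_s}_p(f)$. A flow $f\in\mathcal{H}$ is a $\varphi$-based Wardrop equilibrium ($\varphi$-WE) if for all $p$ with $f_p>0$ we have $C^\varphi_p(f)\le C^\varphi_r(f)$ for all $r\in\mathcal{P}$; $\mathcal{W}^\varphi$ denotes the set of $\varphi$-WE. For each $s$, $\varphi^{\theta_s}\in\Delta_1^m$ is the distribution with $\varphi^{\theta_s}_s=1$, and $\mathcal{W}^{\theta_s}:=\mathcal{W}^{\varphi^{\theta_s}}$. For $\varphi\in\Delta_1^m$, $\mathcal{R}^{\mathrm{use}}_\varphi=\{p\in\mathcal{P}:\exists f\in\mathcal{W}^\varphi,\ f_p>0\}$. In the two-state case, the set of informative flows is $$\mathcal{F}_{\mathrm{inf}}=\{f\in\mathcal{H}: f\notin\mathcal{W}^{\theta_1}\cup\mathcal{W}^{\theta_2},\ f_p>0\ \text{for all } p\in\mathcal{R}^{\mathrm{use}}_{\varphi^{\theta_1}}\}.$$ *)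

theory Defs
  imports "HOL-Analysis.Analysis"
begin

(* Directed (multi)graph: edge set E :: 'e set, each edge e has tail src e and head dst e.
   A path is a list of edges; its vertex sequence is vo # map dst es. *)

definition path_verts :: "('e \<Rightarrow> 'v) \<Rightarrow> 'v \<Rightarrow> 'e list \<Rightarrow> 'v list" where
  "path_verts dst vo es = vo # map dst es"

definition od_paths :: "('e \<Rightarrow> 'v) \<Rightarrow> ('e \<Rightarrow> 'v) \<Rightarrow> 'e set \<Rightarrow> 'v \<Rightarrow> 'v \<Rightarrow> 'e list set" where
  "od_paths src dst E vo vd =
     {es. set es \<subseteq> E
        \<and> (\<forall>i<length es. src (es ! i) = path_verts dst vo es ! i)
        \<and> last (path_verts dst vo es) = vd
        \<and> distinct (path_verts dst vo es)}"

definition feasible_flows :: "'e list set \<Rightarrow> ('e list \<Rightarrow> real) set" where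
  "feasible_flows P = {f. (\<forall>p\<in>P. f p \<ge> 0) \<and> (\<forall>p. p \<notin> P \<longrightarrow> f p = 0) \<and> (\<Sum>p\<in>P. f p) = 1}"

definition edge_flow :: "'e list set \<Rightarrow> ('e list \<Rightarrow> real) \<Rightarrow> 'e \<Rightarrow> real" where
  "edge_flow P f e = (\<Sum>p\<in>{p\<in>P. e \<in> set p}. f p)"

(* cost of path p in state s: C s e is the cost function of edge e in state theta_s *)
definition path_cost :: "(nat \<Rightarrow> 'e \<Rightarrow> real \<Rightarrow> real) \<Rightarrow> 'e list set \<Rightarrow> nat \<Rightarrow> 'e list \<Rightarrow> ('e list \<Rightarrow> real) \<Rightarrow> real" where
  "path_cost C P s p f = sum_list (map (\<lambda>e. C s e (edge_flow P f e)) p)"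

definition exp_cost :: "nat \<Rightarrow> (nat \<Rightarrow> 'e \<Rightarrow> real \<Rightarrow> real) \<Rightarrow> 'e list set \<Rightarrow> (nat \<Rightarrow> real) \<Rightarrow> 'e list \<Rightarrow> ('e list \<Rightarrow> real) \<Rightarrow> real" where
  "exp_cost m C P \<phi> p f = (\<Sum>s=1..m. \<phi> s * path_cost C P s p f)"

definition prob_simplex :: "nat \<Rightarrow> (nat \<Rightarrow> real) set" where
  "prob_simplex m = {\<phi>. (\<forall>i\<in>{1..m}. \<phi> i \<ge> 0) \<and> (\<forall>i. i \<notin> {1..m} \<longrightarrow> \<phi> i = 0) \<and> (\<Sum>i=1..m. \<phi> i) = 1}"

definition point_dist :: "nat \<Rightarrow> nat \<Rightarrow> real" where
  "point_dist s = (\<lambda>i. if i = s then 1 else 0)"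

definition WE :: "nat \<Rightarrow> (nat \<Rightarrow> 'e \<Rightarrow> real \<Rightarrow> real) \<Rightarrow> 'e list set \<Rightarrow> (nat \<Rightarrow> real) \<Rightarrow> ('e list \<Rightarrow> real) set" where
  "WE m C P \<phi> = {f \<in> feasible_flows P. \<forall>p\<in>P. f p > 0 \<longrightarrow> (\<forall>r\<in>P. exp_cost m C P \<phi> p f \<le> exp_cost m C P \<phi> r f)}"

definition R_use :: "nat \<Rightarrow> (nat \<Rightarrow> 'e \<Rightarrow> real \<Rightarrow> real) \<Rightarrow> 'e list set \<Rightarrow> (nat \<Rightarrow> real) \<Rightarrow> 'e list set" where
  "R_use m C P \<phi> = {p\<in>P. \<exists>f\<in>WE m C P \<phi>. f p > 0}"

definition F_inf :: "(nat \<Rightarrow> 'e \<Rightarrow> real \<Rightarrow> real) \<Rightarrow> 'e list set \<Rightarrow> ('e list \<Rightarrow> real) set" where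
  "F_inf C P = {f \<in> feasible_flows P.
      f \<notin> WE 2 C P (point_dist 1) \<union> WE 2 C P (point_dist 2)
      \<and> (\<forall>p\<in>R_use 2 C P (point_dist 1). f p > 0)}"

end

(*
  Write b for the probability of the first state. The expected edge costs b C1 + (1 - b) C2 are
  strictly increasing, so equilibria exist (they minimise Beckmann's potential), all equilibria for the
  same b have the same edge loads, and every feasible flow with these loads is again an equilibrium.
  Hence two beliefs with a common equilibrium have the same equilibrium set; as the equilibrium
  conditions are affine in b, the beliefs with equilibrium set W(theta1) form an interval [t, 1] and
  those with W(theta2) an interval [0, s], where s < t. With xi = (t, 1 - t) and eta = (r, 1 - r) for
  some r in [s, t) close to t, mixtures of theta1 and xi keep b in [t, 1], which is (i). For b strictly
  between r and t, a monotonicity estimate shows that every edge loaded under theta1 stays loaded.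
  Splicing used paths along the edges of any path used under theta1 shows that such a path is a
  shortest path that can carry flow without changing the loads, and averaging gives an equilibrium
  using all these paths; it lies neither in W(theta1) nor in W(theta2).
*)
theory Submission
  imports Defs
begin

section \<open>Walks and origin-destination paths\<close>

primrec walk :: "('e \<Rightarrow> 'v) \<Rightarrow> ('e \<Rightarrow> 'v) \<Rightarrow> 'e set \<Rightarrow> 'v \<Rightarrow> 'e list \<Rightarrow> 'v \<Rightarrow> bool" where
  "walk src dst E u [] w \<longleftrightarrow> u = w"
| "walk src dst E u (e # es) w \<longleftrightarrow> e \<in> E \<and> src e = u \<and> walk src dst E (dst e) es w"

lemma path_verts_Cons: "path_verts dst u (e # es) = u # path_verts dst (dst e) es"
  by (simp add: path_verts_def)

lemma walk_iff_path_verts: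
  "walk src dst E u es w \<longleftrightarrow> set es \<subseteq> E
     \<and> (\<forall>i<length es. src (es ! i) = path_verts dst u es ! i) \<and> last (path_verts dst u es) = w"
proof (induction es arbitrary: u)
  case Nil
  show ?case by (simp add: path_verts_def)
next
  case (Cons e es)
  have "(\<forall>i<length (e # es). src ((e # es) ! i) = path_verts dst u (e # es) ! i) \<longleftrightarrow>
      src e = u \<and> (\<forall>i<length es. src (es ! i) = path_verts dst (dst e) es ! i)"
    by (auto simp: path_verts_Cons less_Suc_eq_0_disj)
  moreover have "last (path_verts dst u (e # es)) = last (path_verts dst (dst e) es)"
    by (simp add: path_verts_def)
  ultimately show ?case using Cons.IH[of "dst e"] by auto
qed

lemma od_paths_walk:
  "od_paths src dst E vo vd = {es. walk src dst E vo es vd \<and> distinct (path_verts dst vo es)}"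
  by (auto simp: od_paths_def walk_iff_path_verts)

lemma walk_append: "walk src dst E u (xs @ ys) w \<longleftrightarrow> (\<exists>v. walk src dst E u xs v \<and> walk src dst E v ys w)"
  by (induction xs arbitrary: u) auto

lemma walk_edges: "walk src dst E u es w \<Longrightarrow> set es \<subseteq> E"
  by (induction es arbitrary: u) auto

lemma walk_last: "walk src dst E u es w \<Longrightarrow> last (path_verts dst u es) = w"
  by (simp add: walk_iff_path_verts)

lemma walk_src_nth: "walk src dst E u es w \<Longrightarrow> i < length es \<Longrightarrow> src (es ! i) = path_verts dst u es ! i"
  by (simp add: walk_iff_path_verts)

lemma distinct_path_verts_imp_distinct: "distinct (path_verts dst u es) \<Longrightarrow> distinct es"
  by (auto simp: path_verts_def distinct_map)

lemma walk_split_at_vertex: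
  assumes "walk src dst E u es w" "v \<in> set (path_verts dst u es)"
  shows "\<exists>as bs. es = as @ bs \<and> walk src dst E u as v \<and> walk src dst E v bs w"
  using assms
proof (induction es arbitrary: u)
  case Nil
  then show ?case by (auto simp: path_verts_def)
next
  case (Cons e es)
  show ?case
  proof (cases "v = u")
    case True
    then show ?thesis using Cons.prems by (intro exI[of _ "[]"] exI[of _ "e # es"]) simp
  next
    case False
    then obtain as bs where "es = as @ bs" "walk src dst E (dst e) as v" "walk src dst E v bs w"
      using Cons.IH[of "dst e"] Cons.prems by (auto simp: path_verts_Cons)
    then show ?thesis using Cons.prems by (intro exI[of _ "e # as"] exI[of _ bs]) simp
  qed
qed

lemma walk_closed_subwalk:
  assumes "walk src dst E u es w" "\<not> distinct (path_verts dst u es)"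
  shows "\<exists>xs ys zs z. es = xs @ ys @ zs \<and> ys \<noteq> []
           \<and> walk src dst E u xs z \<and> walk src dst E z ys z \<and> walk src dst E z zs w"
  using assms
proof (induction es arbitrary: u)
  case Nil
  then show ?case by (simp add: path_verts_def)
next
  case (Cons e es)
  show ?case
  proof (cases "u \<in> set (path_verts dst (dst e) es)")
    case True
    then obtain as bs where "es = as @ bs" "walk src dst E (dst e) as u" "walk src dst E u bs w"
      using walk_split_at_vertex Cons.prems by (metis walk.simps(2))
    then show ?thesis using Cons.prems
      by (intro exI[of _ "[]"] exI[of _ "e # as"] exI[of _ bs] exI[of _ u]) simp
  next
    case False
    then obtain xs ys zs z where "es = xs @ ys @ zs" "ys \<noteq> []" "walk src dst E (dst e) xs z"
        "walk src dst E z ys z" "walk src dst E z zs w"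
      using Cons.IH[of "dst e"] Cons.prems by (auto simp: path_verts_Cons)
    then show ?thesis using Cons.prems
      by (intro exI[of _ "e # xs"] exI[of _ ys] exI[of _ zs] exI[of _ z]) simp
  qed
qed

lemma walk_remove_cycles:
  fixes g :: "'e \<Rightarrow> real"
  assumes "walk src dst E u es w" "\<forall>e\<in>set es. g e > 0" "\<not> distinct (path_verts dst u es)"
  shows "\<exists>es'. walk src dst E u es' w \<and> distinct (path_verts dst u es')
           \<and> sum_list (map g es') < sum_list (map g es)"
  using assms
proof (induction "length es" arbitrary: es rule: less_induct)
  case less
  obtain xs ys zs z where es: "es = xs @ ys @ zs" "ys \<noteq> []" "walk src dst E u xs z"
      "walk src dst E z ys z" "walk src dst E z zs w"
    using walk_closed_subwalk less.prems(1,3) by metis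
  have short: "walk src dst E u (xs @ zs) w" "length (xs @ zs) < length es"
    using es by (auto simp: walk_append)
  obtain y where "y \<in> set ys" using es(2) by (cases ys) auto
  moreover have "\<forall>e\<in>set ys. 0 < g e" using less.prems(2) es(1) by auto
  ultimately have "0 < g y" "g y \<le> sum_list (map g ys)"
    using member_le_sum_list[of "g y" "map g ys"] by (auto intro: less_imp_le)
  then have "sum_list (map g ys) > 0" by linarith
  then have less_weight: "sum_list (map g (xs @ zs)) < sum_list (map g es)"
    using es(1) by simp
  show ?case
  proof (cases "distinct (path_verts dst u (xs @ zs))")
    case True
    then show ?thesis using short less_weight by blast
  next
    case False
    then show ?thesis using less.hyps[OF short(2) short(1) _ False] less.prems(2) es(1) less_weight
      by fastforce
  qed
qed

lemma walk_around_nth: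
  assumes "walk src dst E u es w" "l < length es"
  shows "walk src dst E u (take l es) (src (es ! l)) \<and> walk src dst E (dst (es ! l)) (drop (Suc l) es) w"
proof -
  have "es = take l es @ (es ! l) # drop (Suc l) es" using assms(2) by (simp add: id_take_nth_drop)
  then obtain z where "walk src dst E u (take l es) z" "walk src dst E z ((es ! l) # drop (Suc l) es) w"
    using assms(1) walk_append by metis
  then show ?thesis by auto
qed

lemma od_path_edge_from_origin:
  assumes "es \<in> od_paths src dst E vo vd" "l < length es" "src (es ! l) = vo"
  shows "l = 0"
proof -
  have es: "walk src dst E vo es vd" "distinct (path_verts dst vo es)"
    using assms(1) by (auto simp: od_paths_walk)
  have "path_verts dst vo es ! l = path_verts dst vo es ! 0"
    using walk_src_nth[OF es(1) assms(2)] assms(3) by (simp add: path_verts_def)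
  then show ?thesis using nth_eq_iff_index_eq[OF es(2), of l 0] assms(2) by (simp add: path_verts_def)
qed

lemma od_path_edge_into_destination:
  assumes "es \<in> od_paths src dst E vo vd" "l < length es" "dst (es ! l) = vd"
  shows "Suc l = length es"
proof -
  have es: "walk src dst E vo es vd" "distinct (path_verts dst vo es)"
    using assms(1) by (auto simp: od_paths_walk)
  have "path_verts dst vo es ! length es = vd"
    using walk_last[OF es(1)] last_conv_nth[of "path_verts dst vo es"] by (simp add: path_verts_def)
  moreover have "path_verts dst vo es ! Suc l = vd" using assms(2,3) by (simp add: path_verts_def)
  ultimately show ?thesis
    using nth_eq_iff_index_eq[OF es(2), of "Suc l" "length es"] assms(2) by (simp add: path_verts_def)
qed

lemma finite_od_paths: "finite E \<Longrightarrow> finite (od_paths src dst E vo vd)"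
proof -
  assume E: "finite E"
  have "od_paths src dst E vo vd \<subseteq> {es. set es \<subseteq> E \<and> length es \<le> card E}"
  proof
    fix es assume "es \<in> od_paths src dst E vo vd"
    then have "set es \<subseteq> E" "distinct es"
      by (auto simp: od_paths_walk dest: walk_edges distinct_path_verts_imp_distinct)
    then show "es \<in> {es. set es \<subseteq> E \<and> length es \<le> card E}"
      using E by (metis card_mono distinct_card mem_Collect_eq)
  qed
  then show ?thesis using finite_lists_length_le[OF E] finite_subset by blast
qed

lemma od_paths_Nil: "[] \<in> od_paths src dst E vo vd \<Longrightarrow> od_paths src dst E vo vd = {[]}"
proof -
  assume Nil: "[] \<in> od_paths src dst E vo vd"
  then have "vo = vd" by (simp add: od_paths_walk path_verts_def)
  have "es = []" if "es \<in> od_paths src dst E vo vd" for es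
  proof (rule ccontr)
    assume "es \<noteq> []"
    have "walk src dst E vo es vd" "distinct (path_verts dst vo es)"
      using that by (auto simp: od_paths_walk)
    then show False
      using \<open>es \<noteq> []\<close> \<open>vo = vd\<close> walk_last last_in_set[of "map dst es"] by (fastforce simp: path_verts_def)
  qed
  then show ?thesis using Nil by blast
qed

section \<open>Wardrop equilibria\<close>

lemma WE_common_cost:
  assumes "f \<in> WE m C P \<phi>"
  obtains M where "\<forall>\<pi>\<in>P. f \<pi> > 0 \<longrightarrow> exp_cost m C P \<phi> \<pi> f = M"
    and "\<forall>r\<in>P. M \<le> exp_cost m C P \<phi> r f"
proof -
  have feasible: "f \<in> feasible_flows P"
    and eq: "\<forall>\<pi>\<in>P. f \<pi> > 0 \<longrightarrow> (\<forall>r\<in>P. exp_cost m C P \<phi> \<pi> f \<le> exp_cost m C P \<phi> r f)"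
    using assms by (auto simp: WE_def)
  have "\<exists>\<pi>\<in>P. f \<pi> > 0"
  proof (rule ccontr)
    assume "\<not> ?thesis"
    then have "(\<Sum>\<pi>\<in>P. f \<pi>) \<le> 0" by (intro sum_nonpos) auto
    then show False using feasible by (simp add: feasible_flows_def)
  qed
  then obtain \<pi> where "\<pi> \<in> P" "f \<pi> > 0" by blast
  then show ?thesis using eq by (intro that[of "exp_cost m C P \<phi> \<pi> f"]) (meson order_antisym)+
qed

lemma WE_total_cost:
  assumes "f \<in> WE m C P \<phi>" and "\<forall>\<pi>\<in>P. f \<pi> > 0 \<longrightarrow> exp_cost m C P \<phi> \<pi> f = M"
  shows "(\<Sum>\<pi>\<in>P. f \<pi> * exp_cost m C P \<phi> \<pi> f) = M"
proof -
  have feasible: "f \<in> feasible_flows P" using assms(1) by (simp add: WE_def)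
  have "(\<Sum>\<pi>\<in>P. f \<pi> * exp_cost m C P \<phi> \<pi> f) = (\<Sum>\<pi>\<in>P. f \<pi> * M)"
  proof (rule sum.cong)
    fix \<pi> assume "\<pi> \<in> P"
    then show "f \<pi> * exp_cost m C P \<phi> \<pi> f = f \<pi> * M"
      using feasible assms(2) by (cases "f \<pi> > 0") (auto simp: feasible_flows_def)
  qed simp
  also have "\<dots> = M" using feasible by (simp add: feasible_flows_def flip: sum_distrib_right)
  finally show ?thesis .
qed

lemma WE_total_cost_le:
  assumes "f \<in> WE m C P \<phi>" and "h \<in> feasible_flows P"
  shows "(\<Sum>\<pi>\<in>P. f \<pi> * exp_cost m C P \<phi> \<pi> f) \<le> (\<Sum>\<pi>\<in>P. h \<pi> * exp_cost m C P \<phi> \<pi> f)"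
proof -
  obtain M where M: "\<forall>\<pi>\<in>P. f \<pi> > 0 \<longrightarrow> exp_cost m C P \<phi> \<pi> f = M" "\<forall>r\<in>P. M \<le> exp_cost m C P \<phi> r f"
    using WE_common_cost[OF assms(1)] by blast
  have "(\<Sum>\<pi>\<in>P. f \<pi> * exp_cost m C P \<phi> \<pi> f) = (\<Sum>\<pi>\<in>P. h \<pi> * M)"
    using WE_total_cost[OF assms(1) M(1)] assms(2) by (simp add: feasible_flows_def flip: sum_distrib_right)
  also have "\<dots> \<le> (\<Sum>\<pi>\<in>P. h \<pi> * exp_cost m C P \<phi> \<pi> f)"
    using assms(2) M(2) by (intro sum_mono mult_left_mono) (auto simp: feasible_flows_def)
  finally show ?thesis .
qed

lemma uses_min_cost_paths_if_total_cost_eq: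
  assumes f: "f \<in> WE m C P \<phi>" and "finite P" and h: "h \<in> feasible_flows P"
    and total: "(\<Sum>\<pi>\<in>P. h \<pi> * exp_cost m C P \<phi> \<pi> f) = (\<Sum>\<pi>\<in>P. f \<pi> * exp_cost m C P \<phi> \<pi> f)"
  shows "\<forall>\<pi>\<in>P. h \<pi> > 0 \<longrightarrow> (\<forall>r\<in>P. exp_cost m C P \<phi> \<pi> f \<le> exp_cost m C P \<phi> r f)"
proof (intro ballI impI)
  fix \<pi> r assume \<pi>: "\<pi> \<in> P" "h \<pi> > 0" and r: "r \<in> P"
  obtain M where M: "\<forall>\<pi>\<in>P. f \<pi> > 0 \<longrightarrow> exp_cost m C P \<phi> \<pi> f = M" "\<forall>r\<in>P. M \<le> exp_cost m C P \<phi> r f"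
    using WE_common_cost[OF f] by blast
  let ?excess = "\<lambda>\<pi>. h \<pi> * (exp_cost m C P \<phi> \<pi> f - M)"
  have "(\<Sum>\<pi>\<in>P. ?excess \<pi>) = (\<Sum>\<pi>\<in>P. h \<pi> * exp_cost m C P \<phi> \<pi> f) - (\<Sum>\<pi>\<in>P. h \<pi>) * M"
    by (simp add: right_diff_distrib sum_subtractf sum_distrib_right)
  also have "\<dots> = 0"
    using total WE_total_cost[OF f M(1)] h by (simp add: feasible_flows_def)
  finally have "(\<Sum>\<pi>\<in>P. ?excess \<pi>) = 0" .
  moreover have "\<forall>\<pi>\<in>P. 0 \<le> ?excess \<pi>"
    using h M(2) by (intro ballI mult_nonneg_nonneg) (auto simp: feasible_flows_def)
  ultimately have "?excess \<pi> = 0" using sum_nonneg_eq_0_iff[OF \<open>finite P\<close>, of ?excess] \<pi>(1) by blast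
  then show "exp_cost m C P \<phi> \<pi> f \<le> exp_cost m C P \<phi> r f" using \<pi>(2) M(2) r by simp
qed

lemma sum_indicator_mult_subset:
  fixes u :: "'a \<Rightarrow> real"
  assumes "finite E" "A \<subseteq> E"
  shows "(\<Sum>e\<in>E. indicator A e * u e) = sum u A"
proof -
  have "(\<Sum>e\<in>E. indicator A e * u e) = (\<Sum>e\<in>E. if e \<in> A then u e else 0)"
    by (intro sum.cong) (auto simp: indicator_def)
  also have "\<dots> = (\<Sum>e\<in>A. if e \<in> A then u e else 0)"
    by (rule sum.mono_neutral_right[OF assms]) auto
  finally show ?thesis by simp
qed

definition two_state_dist :: "real \<Rightarrow> nat \<Rightarrow> real" where
  "two_state_dist b = (\<lambda>i. if i = 1 then b else if i = 2 then 1 - b else 0)"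

lemma point_dist_eq_two_state_dist: "point_dist 1 = two_state_dist 1" "point_dist 2 = two_state_dist 0"
  by (auto simp: point_dist_def two_state_dist_def)

lemma mix_two_state_dist:
  "(\<lambda>i. l * two_state_dist a i + (1 - l) * two_state_dist b i) = two_state_dist (l * a + (1 - l) * b)"
  by (auto simp: two_state_dist_def algebra_simps)

lemma convex_comb_mem_interval:
  fixes a b l :: real
  shows "a \<le> b \<Longrightarrow> l \<in> {0..1} \<Longrightarrow> l * b + (1 - l) * a \<in> {a..b}"
    and "a < b \<Longrightarrow> l \<in> {0<..<1} \<Longrightarrow> l * b + (1 - l) * a \<in> {a<..<b}"
proof -
  have eq: "l * b + (1 - l) * a - a = l * (b - a)" "b - (l * b + (1 - l) * a) = (1 - l) * (b - a)"
    by (simp add: algebra_simps)+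
  show "l * b + (1 - l) * a \<in> {a..b}" if "a \<le> b" "l \<in> {0..1}"
  proof -
    have "0 \<le> l * (b - a)" "0 \<le> (1 - l) * (b - a)" using that by simp_all
    then show ?thesis unfolding atLeastAtMost_iff using eq by linarith
  qed
  show "l * b + (1 - l) * a \<in> {a<..<b}" if "a < b" "l \<in> {0<..<1}"
  proof -
    have "0 < l * (b - a)" "0 < (1 - l) * (b - a)" using that by simp_all
    then show ?thesis unfolding greaterThanLessThan_iff using eq by linarith
  qed
qed

lemma two_state_dist_simplex: "b \<in> {0..1} \<Longrightarrow> two_state_dist b \<in> prob_simplex 2"
  by (auto simp: prob_simplex_def two_state_dist_def numeral_2_eq_2)

locale two_state_network =
  fixes src dst :: "'e \<Rightarrow> 'v" and E :: "'e set" and vo vd :: 'v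
    and C :: "nat \<Rightarrow> 'e \<Rightarrow> real \<Rightarrow> real"
  assumes finite_edges: "finite E"
    and costs: "\<forall>s\<in>{1,2}. \<forall>e\<in>E. continuous_on {0..} (C s e)
            \<and> strict_mono_on {0..} (C s e) \<and> (\<forall>x\<ge>0. C s e x \<ge> 0)"
begin

abbreviation "P \<equiv> od_paths src dst E vo vd"
abbreviation "load f e \<equiv> edge_flow P f e"
abbreviation "W b \<equiv> WE 2 C P (two_state_dist b)"
abbreviation "cost b \<pi> f \<equiv> exp_cost 2 C P (two_state_dist b) \<pi> f"

definition mixed_cost :: "real \<Rightarrow> 'e \<Rightarrow> real \<Rightarrow> real" where
  "mixed_cost b e z = b * C 1 e z + (1 - b) * C 2 e z"

lemma finite_P: "finite P"
  using finite_od_paths[OF finite_edges] .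

lemma od_pathD:
  assumes "\<pi> \<in> P"
  shows "walk src dst E vo \<pi> vd" "distinct (path_verts dst vo \<pi>)" "distinct \<pi>" "set \<pi> \<subseteq> E"
  using assms by (auto simp: od_paths_walk dest: walk_edges distinct_path_verts_imp_distinct)

lemma exp_cost_two_states:
  "exp_cost 2 C P \<phi> \<pi> f = \<phi> 1 * path_cost C P 1 \<pi> f + \<phi> 2 * path_cost C P 2 \<pi> f"
  by (simp add: exp_cost_def numeral_2_eq_2)

lemma WE_cong_two_states: "\<phi> 1 = \<psi> 1 \<Longrightarrow> \<phi> 2 = \<psi> 2 \<Longrightarrow> WE 2 C P \<phi> = WE 2 C P \<psi>"
  by (simp add: WE_def exp_cost_two_states)

lemma cost_eq_sum_list: "cost b \<pi> f = sum_list (map (\<lambda>e. mixed_cost b e (load f e)) \<pi>)"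
  by (simp add: exp_cost_two_states two_state_dist_def path_cost_def mixed_cost_def
      sum_list_addf sum_list_const_mult)

lemma cost_eq_sum: "\<pi> \<in> P \<Longrightarrow> cost b \<pi> f = (\<Sum>e\<in>set \<pi>. mixed_cost b e (load f e))"
  using cost_eq_sum_list sum_list_distinct_conv_sum_set od_pathD(3) by metis

lemma C_continuous: "s \<in> {1,2} \<Longrightarrow> e \<in> E \<Longrightarrow> continuous_on {0..} (C s e)"
  and C_strict_mono: "s \<in> {1,2} \<Longrightarrow> e \<in> E \<Longrightarrow> 0 \<le> x \<Longrightarrow> x < y \<Longrightarrow> C s e x < C s e y"
  and C_mono: "s \<in> {1,2} \<Longrightarrow> e \<in> E \<Longrightarrow> 0 \<le> x \<Longrightarrow> x \<le> y \<Longrightarrow> C s e x \<le> C s e y"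
  and C_nonneg: "s \<in> {1,2} \<Longrightarrow> e \<in> E \<Longrightarrow> 0 \<le> x \<Longrightarrow> 0 \<le> C s e x"
  using costs by (auto simp: strict_mono_on_def le_less)

lemma mixed_cost_continuous: "e \<in> E \<Longrightarrow> continuous_on {0..} (mixed_cost b e)"
  unfolding mixed_cost_def by (intro continuous_intros C_continuous) auto

lemma mixed_cost_mono: "b \<in> {0..1} \<Longrightarrow> e \<in> E \<Longrightarrow> 0 \<le> x \<Longrightarrow> x \<le> y \<Longrightarrow> mixed_cost b e x \<le> mixed_cost b e y"
  unfolding mixed_cost_def by (intro add_mono mult_left_mono C_mono) auto

lemma mixed_cost_strict_mono:
  assumes b: "b \<in> {0..1}" and "e \<in> E" "0 \<le> x" "x < y"
  shows "mixed_cost b e x < mixed_cost b e y"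
proof -
  have C: "C 1 e x < C 1 e y" "C 2 e x < C 2 e y" using C_strict_mono assms by auto
  show ?thesis
  proof (cases "b = 0")
    case True
    then show ?thesis using C by (simp add: mixed_cost_def)
  next
    case False
    then have "b * C 1 e x < b * C 1 e y" using b C by simp
    moreover have "(1 - b) * C 2 e x \<le> (1 - b) * C 2 e y" using b C by (intro mult_left_mono) auto
    ultimately show ?thesis by (simp add: mixed_cost_def)
  qed
qed

lemma mixed_cost_pos:
  assumes "b \<in> {0..1}" "e \<in> E" "0 < z"
  shows "0 < mixed_cost b e z"
proof -
  have "0 \<le> mixed_cost b e 0"
    using assms C_nonneg[of 1 e 0] C_nonneg[of 2 e 0] by (simp add: mixed_cost_def)
  then show ?thesis using mixed_cost_strict_mono[of b e 0 z] assms by linarith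
qed

lemma load_nonneg: "f \<in> feasible_flows P \<Longrightarrow> 0 \<le> load f e"
  unfolding edge_flow_def by (intro sum_nonneg) (auto simp: feasible_flows_def)

lemma load_le_1: "f \<in> feasible_flows P \<Longrightarrow> load f e \<le> 1"
proof -
  assume f: "f \<in> feasible_flows P"
  then have "load f e \<le> (\<Sum>\<pi>\<in>P. f \<pi>)"
    unfolding edge_flow_def using finite_P by (intro sum_mono2) (auto simp: feasible_flows_def)
  then show ?thesis using f by (simp add: feasible_flows_def)
qed

lemma flow_le_load: "f \<in> feasible_flows P \<Longrightarrow> \<pi> \<in> P \<Longrightarrow> e \<in> set \<pi> \<Longrightarrow> f \<pi> \<le> load f e"
  unfolding edge_flow_def using finite_P by (intro member_le_sum) (auto simp: feasible_flows_def)

lemma load_pos_imp_used_path: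
  assumes "f \<in> feasible_flows P" "load f e > 0"
  obtains q where "q \<in> P" "f q > 0" "e \<in> set q"
proof -
  have "\<not> (\<forall>q\<in>{q\<in>P. e \<in> set q}. f q \<le> 0)"
    using assms(2) sum_nonpos[of "{q\<in>P. e \<in> set q}" f] by (auto simp: edge_flow_def)
  then show ?thesis using that by force
qed

lemma continuous_on_load: "continuous_on S (\<lambda>f. load f e)"
  unfolding edge_flow_def
  by (intro continuous_on_sum continuous_on_subset[OF continuous_on_product_coordinates]) auto

lemma sum_paths_eq_sum_edges:
  assumes "h \<in> feasible_flows P"
  shows "(\<Sum>\<pi>\<in>P. h \<pi> * cost b \<pi> k) = (\<Sum>e\<in>E. load h e * mixed_cost b e (load k e))"
proof -
  let ?c = "\<lambda>e. mixed_cost b e (load k e)"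
  have "(\<Sum>\<pi>\<in>P. h \<pi> * cost b \<pi> k) = (\<Sum>\<pi>\<in>P. \<Sum>e\<in>E. indicator (set \<pi>) e * (h \<pi> * ?c e))"
    using sum_indicator_mult_subset[OF finite_edges od_pathD(4)]
    by (intro sum.cong) (simp_all add: cost_eq_sum mult.left_commute flip: sum_distrib_left)
  also have "\<dots> = (\<Sum>e\<in>E. \<Sum>\<pi>\<in>P. indicator (set \<pi>) e * (h \<pi> * ?c e))"
    by (rule sum.swap)
  also have "\<dots> = (\<Sum>e\<in>E. load h e * ?c e)"
  proof (rule sum.cong[OF refl])
    fix e
    show "(\<Sum>\<pi>\<in>P. indicator (set \<pi>) e * (h \<pi> * ?c e)) = load h e * ?c e"
      unfolding edge_flow_def sum_distrib_right sum.inter_filter[OF finite_P]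
      by (intro sum.cong refl) (simp add: indicator_def)
  qed
  finally show ?thesis .
qed

lemma WE_if_same_loads:
  assumes f: "f \<in> W b" and g: "g \<in> feasible_flows P" and same: "\<forall>e\<in>E. load g e = load f e"
  shows "g \<in> W b"
proof -
  have f_feasible: "f \<in> feasible_flows P" using f by (simp add: WE_def)
  have same_cost: "cost b \<pi> g = cost b \<pi> f" if "\<pi> \<in> P" for \<pi>
    using that same od_pathD(4)[OF that] by (auto simp: cost_eq_sum intro!: sum.cong)
  have "(\<Sum>\<pi>\<in>P. g \<pi> * cost b \<pi> f) = (\<Sum>\<pi>\<in>P. f \<pi> * cost b \<pi> f)"
    using same by (simp add: sum_paths_eq_sum_edges[OF g] sum_paths_eq_sum_edges[OF f_feasible])
  then have "\<forall>\<pi>\<in>P. g \<pi> > 0 \<longrightarrow> (\<forall>r\<in>P. cost b \<pi> f \<le> cost b r f)"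
    by (rule uses_min_cost_paths_if_total_cost_eq[OF f finite_P g])
  then show ?thesis using g same_cost by (simp add: WE_def)
qed

lemma WE_variational_inequality:
  assumes f: "f \<in> W a" and g: "g \<in> W b"
  shows "(\<Sum>e\<in>E. (load f e - load g e) * (mixed_cost a e (load f e) - mixed_cost b e (load g e))) \<le> 0"
proof -
  have f_feasible: "f \<in> feasible_flows P" and g_feasible: "g \<in> feasible_flows P"
    using f g by (simp_all add: WE_def)
  have "(\<Sum>e\<in>E. load f e * mixed_cost a e (load f e)) \<le> (\<Sum>e\<in>E. load g e * mixed_cost a e (load f e))"
    using WE_total_cost_le[OF f g_feasible] by (simp add: sum_paths_eq_sum_edges f_feasible g_feasible)
  moreover have "(\<Sum>e\<in>E. load g e * mixed_cost b e (load g e)) \<le> (\<Sum>e\<in>E. load f e * mixed_cost b e (load g e))"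
    using WE_total_cost_le[OF g f_feasible] by (simp add: sum_paths_eq_sum_edges f_feasible g_feasible)
  ultimately show ?thesis
    by (simp add: algebra_simps sum.distrib sum_subtractf)
qed

lemma mono_imp_nonneg_product:
  fixes c :: "real \<Rightarrow> real"
  assumes "\<And>u w. 0 \<le> u \<Longrightarrow> u \<le> w \<Longrightarrow> c u \<le> c w" "0 \<le> x" "0 \<le> y"
  shows "0 \<le> (x - y) * (c x - c y)"
  using assms by (cases "x \<le> y") (auto intro: mult_nonpos_nonpos mult_nonneg_nonneg)

lemma load_cost_product_nonneg:
  assumes "a \<in> {0..1}" "e \<in> E" "f \<in> feasible_flows P" "g \<in> feasible_flows P"
  shows "0 \<le> (load f e - load g e) * (mixed_cost a e (load f e) - mixed_cost a e (load g e))"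
  using assms by (intro mono_imp_nonneg_product mixed_cost_mono load_nonneg) auto

lemma WE_loads_unique:
  assumes a: "a \<in> {0..1}" and f: "f \<in> W a" and g: "g \<in> W a" and e: "e \<in> E"
  shows "load f e = load g e"
proof (rule ccontr)
  assume ne: "load f e \<noteq> load g e"
  have f_feasible: "f \<in> feasible_flows P" and g_feasible: "g \<in> feasible_flows P"
    using f g by (simp_all add: WE_def)
  let ?term = "\<lambda>e. (load f e - load g e) * (mixed_cost a e (load f e) - mixed_cost a e (load g e))"
  have nonneg: "\<forall>e\<in>E. 0 \<le> ?term e"
    using load_cost_product_nonneg[OF a _ f_feasible g_feasible] by blast
  then have "0 \<le> (\<Sum>e\<in>E. ?term e)" by (simp add: sum_nonneg)
  then have "(\<Sum>e\<in>E. ?term e) = 0" using WE_variational_inequality[OF f g] by linarith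
  then have "?term e = 0" using sum_nonneg_eq_0_iff[OF finite_edges, of ?term] nonneg e by blast
  moreover have "mixed_cost a e (load f e) \<noteq> mixed_cost a e (load g e)"
  proof (cases "load f e < load g e")
    case True
    then show ?thesis using mixed_cost_strict_mono[OF a e load_nonneg[OF f_feasible]] by fastforce
  next
    case False
    then have "load g e < load f e" using ne by simp
    then show ?thesis using mixed_cost_strict_mono[OF a e load_nonneg[OF g_feasible]] by fastforce
  qed
  ultimately show False using ne by simp
qed

lemma WE_eq_if_common_flow:
  assumes "a \<in> {0..1}" "b \<in> {0..1}" "f \<in> W a" "f \<in> W b"
  shows "W a = W b"
proof -
  have "h \<in> W d" if "c \<in> {0..1}" "f \<in> W c" "f \<in> W d" "h \<in> W c" for c d h
    using that WE_loads_unique[of c h f] WE_if_same_loads[of f d h] by (simp add: WE_def)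
  then show ?thesis using assms by blast
qed

end

section \<open>Existence via Beckmann's potential\<close>

lemma compact_feasible_flows:
  fixes P :: "'a list set"
  assumes "finite P"
  shows "compact (feasible_flows P)"
proof -
  define S where "S \<pi> = (if \<pi> \<in> P then {0..1::real} else {0})" for \<pi>
  have flows: "feasible_flows P = PiE UNIV S \<inter> {f. (\<Sum>\<pi>\<in>P. f \<pi>) = 1}"
  proof (intro set_eqI iffI)
    fix f assume f: "f \<in> feasible_flows P"
    have "f \<pi> \<le> 1" if "\<pi> \<in> P" for \<pi>
      using f that assms member_le_sum[of \<pi> P f] by (auto simp: feasible_flows_def)
    then show "f \<in> PiE UNIV S \<inter> {f. (\<Sum>\<pi>\<in>P. f \<pi>) = 1}"
      using f by (auto simp: S_def PiE_def feasible_flows_def)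
  next
    fix f assume "f \<in> PiE UNIV S \<inter> {f. (\<Sum>\<pi>\<in>P. f \<pi>) = 1}"
    then show "f \<in> feasible_flows P"
      by (auto simp: PiE_def Pi_def S_def feasible_flows_def split: if_splits)
  qed
  have "compactin (product_topology (\<lambda>_. euclidean) UNIV) (PiE UNIV S)"
    by (subst compactin_PiE) (auto simp: S_def)
  then have "compact (PiE UNIV S)"
    by (simp add: euclidean_product_topology compactin_euclidean_iff)
  moreover have "closed {f::'a list \<Rightarrow> real. (\<Sum>\<pi>\<in>P. f \<pi>) = 1}"
    by (intro closed_Collect_eq continuous_on_sum continuous_on_product_coordinates continuous_on_const)
  ultimately show ?thesis unfolding flows by (rule compact_Int_closed)
qed

lemma integral_increment_le:
  fixes c :: "real \<Rightarrow> real"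
  assumes c: "continuous_on {0..} c" and mono: "\<And>u w. 0 \<le> u \<Longrightarrow> u \<le> w \<Longrightarrow> c u \<le> c w"
    and "0 \<le> x" "0 \<le> y"
  shows "integral {0..y} c - integral {0..x} c \<le> (y - x) * c y"
proof -
  have int: "c integrable_on {u..v}" if "0 \<le> u" for u v
    using that by (intro integrable_continuous_real continuous_on_subset[OF c]) auto
  show ?thesis
  proof (cases "x \<le> y")
    case True
    have "integral {0..x} c + integral {x..y} c = integral {0..y} c"
      using Henstock_Kurzweil_Integration.integral_combine[OF \<open>0 \<le> x\<close> True int[of 0 y, simplified]]
      by simp
    moreover have "integral {x..y} c \<le> integral {x..y} (\<lambda>_. c y)"
      using True \<open>0 \<le> x\<close> by (intro integral_le int) (auto intro: mono)
    ultimately show ?thesis using True by simp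
  next
    case False
    have "integral {0..y} c + integral {y..x} c = integral {0..x} c"
      using Henstock_Kurzweil_Integration.integral_combine[OF \<open>0 \<le> y\<close> _ int[of 0 x, simplified]] False
      by simp
    moreover have "integral {y..x} (\<lambda>_. c y) \<le> integral {y..x} c"
      using False \<open>0 \<le> y\<close> by (intro integral_le int) (auto intro: mono)
    ultimately show ?thesis using False by (simp add: algebra_simps)
  qed
qed

lemma sum_indicator_singleton: "finite A \<Longrightarrow> (\<Sum>y\<in>A. indicator {x} y :: real) = indicator A x"
  by (simp add: indicator_def sum.delta')

definition move_flow :: "'a \<Rightarrow> 'a \<Rightarrow> real \<Rightarrow> ('a \<Rightarrow> real) \<Rightarrow> 'a \<Rightarrow> real" where
  "move_flow \<pi> r \<epsilon> f = (\<lambda>\<rho>. f \<rho> + \<epsilon> * (indicator {r} \<rho> - indicator {\<pi>} \<rho>))"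

lemma move_flow_feasible:
  assumes "finite P" "f \<in> feasible_flows P" "\<pi> \<in> P" "r \<in> P" "\<pi> \<noteq> r" "\<epsilon> \<in> {0..f \<pi>}"
  shows "move_flow \<pi> r \<epsilon> f \<in> feasible_flows P"
proof -
  have "(\<Sum>\<rho>\<in>P. move_flow \<pi> r \<epsilon> f \<rho>) = (\<Sum>\<rho>\<in>P. f \<rho>)"
    using assms(1,3,4) by (simp add: move_flow_def sum.distrib sum_subtractf sum_indicator_singleton
        flip: sum_distrib_left)
  then show ?thesis
    using assms by (auto simp: move_flow_def feasible_flows_def indicator_def)
qed

lemma edge_flow_move_flow:
  assumes "finite P" "\<pi> \<in> P" "r \<in> P"
  shows "edge_flow P (move_flow \<pi> r \<epsilon> f) e
           = edge_flow P f e + \<epsilon> * (indicator (set r) e - indicator (set \<pi>) e)"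
proof -
  have "finite {\<rho> \<in> P. e \<in> set \<rho>}" using assms(1) by simp
  then show ?thesis
    using assms(2,3)
    by (simp add: edge_flow_def move_flow_def sum.distrib sum_subtractf sum_indicator_singleton
        flip: sum_distrib_left) (simp add: indicator_def)
qed

context two_state_network
begin

text \<open>Beckmann's potential, whose optimality conditions over the feasible flows are the Wardrop conditions.\<close>

definition potential :: "real \<Rightarrow> ('e list \<Rightarrow> real) \<Rightarrow> real" where
  "potential b f = (\<Sum>e\<in>E. integral {0..load f e} (mixed_cost b e))"

lemma potential_move_flow_le:
  assumes b: "b \<in> {0..1}" and f: "f \<in> feasible_flows P" and paths: "\<pi> \<in> P" "r \<in> P" "\<pi> \<noteq> r"
    and \<epsilon>: "\<epsilon> \<in> {0..f \<pi>}"
  defines "g \<equiv> move_flow \<pi> r \<epsilon> f"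
  shows "potential b g - potential b f \<le> \<epsilon> * (cost b r g - cost b \<pi> g)"
proof -
  have g: "g \<in> feasible_flows P" unfolding g_def by (rule move_flow_feasible[OF finite_P f paths \<epsilon>])
  have load_g: "load g e = load f e + \<epsilon> * (indicator (set r) e - indicator (set \<pi>) e)" for e
    unfolding g_def by (rule edge_flow_move_flow[OF finite_P paths(1,2)])
  let ?c = "\<lambda>e. mixed_cost b e (load g e)"
  have "potential b g - potential b f
      = (\<Sum>e\<in>E. integral {0..load g e} (mixed_cost b e) - integral {0..load f e} (mixed_cost b e))"
    by (simp add: potential_def sum_subtractf)
  also have "\<dots> \<le> (\<Sum>e\<in>E. (load g e - load f e) * ?c e)"
    using f g b by (intro sum_mono integral_increment_le mixed_cost_continuous mixed_cost_mono load_nonneg)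
  also have "\<dots> = (\<Sum>e\<in>E. \<epsilon> * (indicator (set r) e * ?c e - indicator (set \<pi>) e * ?c e))"
    by (intro sum.cong refl) (simp add: load_g algebra_simps)
  also have "\<dots> = \<epsilon> * ((\<Sum>e\<in>E. indicator (set r) e * ?c e) - (\<Sum>e\<in>E. indicator (set \<pi>) e * ?c e))"
    by (simp only: sum_distrib_left[symmetric] sum_subtractf)
  also have "\<dots> = \<epsilon> * (cost b r g - cost b \<pi> g)"
    using paths by (simp add: sum_indicator_mult_subset[OF finite_edges od_pathD(4)] cost_eq_sum)
  finally show ?thesis .
qed

lemma continuous_on_cost_move_flow:
  assumes f: "f \<in> feasible_flows P" and "\<pi> \<in> P" "r \<in> P" "\<pi> \<noteq> r" and q: "q \<in> P"
  shows "continuous_on {0..f \<pi>} (\<lambda>\<epsilon>. cost b q (move_flow \<pi> r \<epsilon> f))"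
proof -
  have "continuous_on {0..f \<pi>} (\<lambda>\<epsilon>. mixed_cost b e (load (move_flow \<pi> r \<epsilon> f) e))" if "e \<in> E" for e
  proof (rule continuous_on_compose2[OF mixed_cost_continuous[OF that]])
    show "continuous_on {0..f \<pi>} (\<lambda>\<epsilon>. load (move_flow \<pi> r \<epsilon> f) e)"
      using finite_P assms by (simp add: edge_flow_move_flow) (intro continuous_intros)
    show "(\<lambda>\<epsilon>. load (move_flow \<pi> r \<epsilon> f) e) ` {0..f \<pi>} \<subseteq> {0..}"
      using move_flow_feasible[OF finite_P f] assms load_nonneg by auto
  qed
  then show ?thesis using od_pathD(4)[OF q] by (simp add: cost_eq_sum[OF q] continuous_on_sum subset_iff)
qed

lemma potential_minimizer_is_WE:
  assumes b: "b \<in> {0..1}" and f: "f \<in> feasible_flows P"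
    and min: "\<forall>g\<in>feasible_flows P. potential b f \<le> potential b g"
  shows "f \<in> W b"
proof -
  have "cost b \<pi> f \<le> cost b r f" if \<pi>: "\<pi> \<in> P" "f \<pi> > 0" and r: "r \<in> P" for \<pi> r
  proof (rule ccontr)
    assume not_min: "\<not> ?thesis"
    then have "r \<noteq> \<pi>" by auto
    let ?gap = "\<lambda>\<epsilon>. cost b r (move_flow \<pi> r \<epsilon> f) - cost b \<pi> (move_flow \<pi> r \<epsilon> f)"
    have "?gap 0 < 0" using not_min by (simp add: move_flow_def)
    moreover have "continuous_on {0..f \<pi>} ?gap"
      using \<pi> r \<open>r \<noteq> \<pi>\<close> by (intro continuous_intros continuous_on_cost_move_flow f) auto
    ultimately obtain d where d: "d > 0" "\<forall>\<epsilon>\<in>{0..f \<pi>}. dist \<epsilon> 0 < d \<longrightarrow> dist (?gap \<epsilon>) (?gap 0) < - ?gap 0"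
      using \<pi>(2) unfolding continuous_on_iff
      by (metis atLeastAtMost_iff neg_0_less_iff_less order_refl less_imp_le)
    define \<epsilon> where "\<epsilon> = min (d / 2) (f \<pi>)"
    have \<epsilon>: "\<epsilon> > 0" "\<epsilon> \<in> {0..f \<pi>}" "dist \<epsilon> 0 < d"
      using d \<pi>(2) by (auto simp: \<epsilon>_def dist_real_def)
    then have "\<bar>?gap \<epsilon> - ?gap 0\<bar> < - ?gap 0" using d(2) by (simp add: dist_real_def)
    then have "?gap \<epsilon> < 0" by linarith
    then have "\<epsilon> * ?gap \<epsilon> < 0" using \<epsilon> by (simp add: mult_pos_neg)
    moreover have "potential b (move_flow \<pi> r \<epsilon> f) - potential b f \<le> \<epsilon> * ?gap \<epsilon>"
      using potential_move_flow_le[OF b f \<pi>(1) r] \<open>r \<noteq> \<pi>\<close> \<epsilon> by auto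
    moreover have "potential b f \<le> potential b (move_flow \<pi> r \<epsilon> f)"
      using min move_flow_feasible[OF finite_P f \<pi>(1) r] \<open>r \<noteq> \<pi>\<close> \<epsilon> by auto
    ultimately show False by linarith
  qed
  then show ?thesis using f by (simp add: WE_def)
qed

lemma WE_exists:
  assumes b: "b \<in> {0..1}" and "P \<noteq> {}"
  obtains f where "f \<in> W b"
proof -
  obtain \<pi> where "\<pi> \<in> P" using assms(2) by blast
  then have "indicator {\<pi>} \<in> feasible_flows P"
    using finite_P by (auto simp: feasible_flows_def sum_indicator_singleton indicator_def)
  moreover have "continuous_on (feasible_flows P) (potential b)"
    unfolding potential_def
  proof (intro continuous_on_sum)
    fix e assume e: "e \<in> E"
    have "continuous_on {0..1} (\<lambda>z. integral {0..z} (mixed_cost b e))"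
      by (intro indefinite_integral_continuous_1 integrable_continuous_real
          continuous_on_subset[OF mixed_cost_continuous[OF e]]) auto
    then show "continuous_on (feasible_flows P) (\<lambda>f. integral {0..load f e} (mixed_cost b e))"
      using load_nonneg load_le_1 by (intro continuous_on_compose2[OF _ continuous_on_load]) auto
  qed
  ultimately obtain f where "f \<in> feasible_flows P" "\<forall>g\<in>feasible_flows P. potential b f \<le> potential b g"
    using continuous_attains_inf[OF compact_feasible_flows[OF finite_P]] by blast
  then show ?thesis using potential_minimizer_is_WE[OF b] that by blast
qed

end

section \<open>Rerouting flow onto loaded paths\<close>

text \<open>Splicing the part of \<open>Q (j + 1)\<close> before its copy of the edge \<open>p ! (j + 1)\<close> to the part of \<open>Q j\<close>
  after its copy of \<open>p ! j\<close>: together with \<open>p\<close>, the spliced walks use exactly the edges of the \<open>Q j\<close>.\<close>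

lemma sum_list_splice:
  fixes g :: "'e \<Rightarrow> real"
  assumes p: "length p = Suc k" and Q: "\<forall>j<Suc k. L j < length (Q j) \<and> Q j ! L j = p ! j"
    and first: "take (L 0) (Q 0) = []" and last: "drop (Suc (L k)) (Q k) = []"
  shows "(\<Sum>j<Suc k. sum_list (map g (Q j))) = sum_list (map g p)
     + (\<Sum>j<k. sum_list (map g (take (L (Suc j)) (Q (Suc j)) @ drop (Suc (L j)) (Q j))))"
proof -
  define pre where "pre j = sum_list (map g (take (L j) (Q j)))" for j
  define suf where "suf j = sum_list (map g (drop (Suc (L j)) (Q j)))" for j
  have split: "sum_list (map g (Q j)) = pre j + g (p ! j) + suf j" if "j < Suc k" for j
  proof -
    have "Q j = take (L j) (Q j) @ (Q j ! L j) # drop (Suc (L j)) (Q j)"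
      using Q that id_take_nth_drop[of "L j" "Q j"] by simp
    then show ?thesis
      using Q that unfolding pre_def suf_def
      by (metis map_append sum_list_append list.map(2) sum_list.Cons add.assoc)
  qed
  have "(\<Sum>j<Suc k. sum_list (map g (Q j))) = (\<Sum>j<Suc k. pre j) + (\<Sum>j<Suc k. g (p ! j)) + (\<Sum>j<Suc k. suf j)"
    using split by (simp add: sum.distrib)
  also have "(\<Sum>j<Suc k. pre j) = (\<Sum>j<k. pre (Suc j))"
    by (simp only: sum.lessThan_Suc_shift pre_def first) simp
  also have "(\<Sum>j<Suc k. suf j) = (\<Sum>j<k. suf j)"
    using last by (simp add: suf_def)
  also have "(\<Sum>j<Suc k. g (p ! j)) = sum_list (map g p)"
    using p by (simp add: sum_list_sum_nth atLeast0LessThan)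
  finally show ?thesis by (simp add: pre_def suf_def sum.distrib)
qed

lemma spliced_walks:
  assumes p: "p \<in> od_paths src dst E vo vd" "length p = Suc k"
    and Q: "\<forall>j<Suc k. Q j \<in> od_paths src dst E vo vd \<and> L j < length (Q j) \<and> Q j ! L j = p ! j"
  shows "\<forall>j<k. walk src dst E vo (take (L (Suc j)) (Q (Suc j)) @ drop (Suc (L j)) (Q j)) vd"
    and "take (L 0) (Q 0) = []" and "drop (Suc (L k)) (Q k) = []"
proof -
  have walk_p: "walk src dst E vo p vd" using p(1) by (simp add: od_paths_walk)
  have around: "walk src dst E vo (take (L j) (Q j)) (src (p ! j))"
    "walk src dst E (dst (p ! j)) (drop (Suc (L j)) (Q j)) vd" if "j < Suc k" for j
    using walk_around_nth[of src dst E vo "Q j" vd "L j"] Q that by (auto simp: od_paths_walk)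
  show "\<forall>j<k. walk src dst E vo (take (L (Suc j)) (Q (Suc j)) @ drop (Suc (L j)) (Q j)) vd"
  proof (intro allI impI)
    fix j assume "j < k"
    then have "src (p ! Suc j) = dst (p ! j)"
      using walk_src_nth[OF walk_p, of "Suc j"] p(2) by (simp add: path_verts_def)
    then show "walk src dst E vo (take (L (Suc j)) (Q (Suc j)) @ drop (Suc (L j)) (Q j)) vd"
      using around[of "Suc j"] around[of j] \<open>j < k\<close> walk_append by fastforce
  qed
  have "src (p ! 0) = vo" using walk_src_nth[OF walk_p, of 0] p(2) by (simp add: path_verts_def)
  then show "take (L 0) (Q 0) = []"
    using od_path_edge_from_origin[of "Q 0" src dst E vo vd "L 0"] Q by auto
  have "p \<noteq> []" using p(2) by auto
  then have "dst (p ! k) = vd"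
    using walk_last[OF walk_p] p(2) by (simp add: path_verts_def last_map last_conv_nth)
  then show "drop (Suc (L k)) (Q k) = []"
    using od_path_edge_into_destination[of "Q k" src dst E vo vd "L k"] Q by auto
qed

definition reroute_direction :: "'a \<Rightarrow> (nat \<Rightarrow> 'a) \<Rightarrow> (nat \<Rightarrow> 'a) \<Rightarrow> nat \<Rightarrow> 'a \<Rightarrow> real" where
  "reroute_direction p r Q k \<rho> = indicator {p} \<rho> + (\<Sum>j<k. indicator {r j} \<rho>) - (\<Sum>j<Suc k. indicator {Q j} \<rho>)"

lemma sum_reroute_direction:
  assumes "finite A"
  shows "(\<Sum>\<rho>\<in>A. reroute_direction p r Q k \<rho>)
           = indicator A p + (\<Sum>j<k. indicator A (r j)) - (\<Sum>j<Suc k. indicator A (Q j))"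
  unfolding reroute_direction_def
  by (simp only: sum.distrib sum_subtractf sum_indicator_singleton[OF assms]
      sum.swap[of "\<lambda>\<rho> j. indicator {r j} \<rho>" "{..<k}" A] sum.swap[of "\<lambda>\<rho> j. indicator {Q j} \<rho>" "{..<Suc k}" A])

lemma reroute_direction_ge: "- real (Suc k) \<le> reroute_direction p r Q k \<rho>"
proof -
  have "(\<Sum>j<Suc k. indicator {Q j} \<rho>) \<le> (\<Sum>j<Suc k. 1::real)"
    by (rule sum_mono) (simp add: indicator_def)
  then have "(\<Sum>j<Suc k. indicator {Q j} \<rho>) \<le> real (Suc k)"
    by (simp only: sum_constant card_lessThan mult_1_right)
  then show ?thesis unfolding reroute_direction_def by (smt (verit) indicator_pos_le sum_nonneg)
qed

lemma reroute_direction_nonneg: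
  assumes "\<forall>j<Suc k. Q j \<noteq> \<rho>"
  shows "0 \<le> reroute_direction p r Q k \<rho>"
proof -
  have "(\<Sum>j<Suc k. indicator {Q j} \<rho>) = (0::real)"
    using assms by (intro sum.neutral) (auto simp: indicator_def)
  then show ?thesis unfolding reroute_direction_def by (smt (verit) indicator_pos_le sum_nonneg)
qed

lemma reroute_direction_at_target:
  assumes "\<forall>j<Suc k. Q j \<noteq> p"
  shows "1 \<le> reroute_direction p r Q k p"
proof -
  have "(\<Sum>j<Suc k. indicator {Q j} p) = (0::real)"
    using assms by (intro sum.neutral) (auto simp: indicator_def)
  then show ?thesis
    unfolding reroute_direction_def by (smt (verit) indicator_simps(1) singletonI indicator_pos_le sum_nonneg)
qed

lemma reroute_direction_outside:
  assumes "\<rho> \<noteq> p" "\<forall>j<k. r j \<noteq> \<rho>" "\<forall>j<Suc k. Q j \<noteq> \<rho>"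
  shows "reroute_direction p r Q k \<rho> = 0"
proof -
  have "(\<Sum>j<k. indicator {r j} \<rho>) = (0::real)" "(\<Sum>j<Suc k. indicator {Q j} \<rho>) = (0::real)"
    using assms(2,3) by (simp_all add: indicator_def sum.neutral del: sum.lessThan_Suc) blast+
  then show ?thesis using assms(1) by (simp add: reroute_direction_def)
qed

lemma indicator_set_eq_sum_list:
  "distinct xs \<Longrightarrow> indicator (set xs) x = (sum_list (map (indicator {x}) xs) :: real)"
  by (simp add: sum_list_distinct_conv_sum_set sum_indicator_singleton)

context two_state_network
begin

lemma reroute_flow:
  assumes f: "f \<in> feasible_flows P" and p: "p \<in> P" "f p = 0"
    and r: "\<forall>j<k. r j \<in> P" and Q: "\<forall>j<Suc k. Q j \<in> P \<and> 0 < f (Q j)"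
    and balance: "\<And>g :: 'e \<Rightarrow> real. sum_list (map g p) + (\<Sum>j<k. sum_list (map g (r j)))
                                       = (\<Sum>j<Suc k. sum_list (map g (Q j)))"
  obtains f' where "f' \<in> feasible_flows P" "0 < f' p" "\<And>e. load f' e = load f e"
proof -
  let ?D = "reroute_direction p r Q k"
  define m where "m = Min ((\<lambda>j. f (Q j)) ` {..<Suc k})"
  have m: "0 < m" "\<And>j. j < Suc k \<Longrightarrow> m \<le> f (Q j)"
    using Q unfolding m_def by (subst Min_gr_iff) auto
  define \<epsilon> where "\<epsilon> = m / Suc k"
  have \<epsilon>: "0 < \<epsilon>" "\<epsilon> * Suc k = m" using m(1) by (auto simp: \<epsilon>_def)
  define f' where "f' \<rho> = f \<rho> + \<epsilon> * ?D \<rho>" for \<rho>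
  have "0 \<le> f' \<rho>" if "\<rho> \<in> P" for \<rho>
  proof (cases "\<exists>j<Suc k. Q j = \<rho>")
    case True
    then have "m \<le> f \<rho>" using m(2) by blast
    moreover have "- m \<le> \<epsilon> * ?D \<rho>"
      using reroute_direction_ge[of k p r Q \<rho>] \<epsilon> by (metis mult_le_cancel_left_pos mult_minus_right)
    ultimately show ?thesis by (simp add: f'_def)
  next
    case False
    then have "0 \<le> ?D \<rho>" by (intro reroute_direction_nonneg) auto
    then show ?thesis using f that \<epsilon>(1) by (simp add: f'_def feasible_flows_def)
  qed
  moreover have "f' \<rho> = 0" if "\<rho> \<notin> P" for \<rho>
    using that f p(1) r Q reroute_direction_outside[of \<rho> p k r Q] by (auto simp: f'_def feasible_flows_def)
  moreover have "(\<Sum>\<rho>\<in>P. f' \<rho>) = 1"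
  proof -
    have "(\<Sum>\<rho>\<in>P. ?D \<rho>) = 0" using sum_reroute_direction[OF finite_P] p r Q by simp
    then show ?thesis using f by (simp add: f'_def sum.distrib feasible_flows_def flip: sum_distrib_left)
  qed
  ultimately have f': "f' \<in> feasible_flows P" by (simp add: feasible_flows_def)
  have "load f' e = load f e" for e
  proof -
    let ?A = "{\<rho> \<in> P. e \<in> set \<rho>}"
    have "indicator ?A \<rho> = (sum_list (map (indicator {e}) \<rho>) :: real)" if "\<rho> \<in> P" for \<rho>
      using that indicator_set_eq_sum_list[OF od_pathD(3)[OF that], of e] by (simp add: indicator_def)
    then have "(\<Sum>\<rho>\<in>?A. ?D \<rho>) = 0"
      using sum_reroute_direction[of ?A] finite_P balance[of "indicator {e}"] p r Q by simp
    then show ?thesis by (simp add: edge_flow_def f'_def sum.distrib flip: sum_distrib_left)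
  qed
  moreover have "\<forall>j<Suc k. Q j \<noteq> p" using Q p(2) by auto
  then have "0 < f' p" using reroute_direction_at_target[of k Q p r] \<epsilon>(1) p(2) by (simp add: f'_def)
  ultimately show ?thesis using f' that by blast
qed

lemma walk_cost_ge_min:
  assumes a: "a \<in> {0..1}" and min: "\<forall>q\<in>P. M \<le> cost a q f"
    and w: "walk src dst E vo w vd" and pos: "\<forall>e\<in>set w. 0 < load f e"
  shows "M \<le> cost a w f" and "w \<notin> P \<Longrightarrow> M < cost a w f"
proof -
  have "\<exists>q\<in>P. cost a q f \<le> cost a w f \<and> (w \<notin> P \<longrightarrow> cost a q f < cost a w f)"
  proof (cases "distinct (path_verts dst vo w)")
    case True
    then show ?thesis using w by (auto simp: od_paths_walk)
  next
    case False
    have "\<forall>e\<in>set w. 0 < mixed_cost a e (load f e)"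
      using pos walk_edges[OF w] mixed_cost_pos[OF a] by blast
    from walk_remove_cycles[OF w this False] obtain q
      where "walk src dst E vo q vd" "distinct (path_verts dst vo q)"
        "sum_list (map (\<lambda>e. mixed_cost a e (load f e)) q) < sum_list (map (\<lambda>e. mixed_cost a e (load f e)) w)"
      by blast
    then show ?thesis unfolding cost_eq_sum_list by (intro bexI[of _ q]) (auto simp: od_paths_walk)
  qed
  then obtain q where "q \<in> P" "cost a q f \<le> cost a w f" "w \<notin> P \<longrightarrow> cost a q f < cost a w f"
    by blast
  moreover have "M \<le> cost a q f" using min \<open>q \<in> P\<close> by blast
  ultimately show "M \<le> cost a w f" and "w \<notin> P \<Longrightarrow> M < cost a w f" by auto
qed

lemma spliced_walks_in_P:
  assumes a: "a \<in> {0..1}" and min: "\<forall>q\<in>P. M \<le> cost a q f" and p: "p \<in> P"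
    and Q: "\<forall>j<Suc k. cost a (Q j) f = M"
    and r: "\<forall>j<k. walk src dst E vo (r j) vd \<and> (\<forall>e\<in>set (r j). 0 < load f e)"
    and balance: "cost a p f + (\<Sum>j<k. cost a (r j) f) = (\<Sum>j<Suc k. cost a (Q j) f)"
  shows "\<forall>j<k. r j \<in> P"
proof (intro allI impI, rule ccontr)
  fix j assume "j < k" "r j \<notin> P"
  have "M \<le> cost a (r i) f" if "i < k" for i
    using walk_cost_ge_min(1)[OF a min] r that by blast
  moreover have "M < cost a (r j) f"
    using walk_cost_ge_min(2)[OF a min] r \<open>j < k\<close> \<open>r j \<notin> P\<close> by blast
  ultimately have "(\<Sum>i<k. M) < (\<Sum>i<k. cost a (r i) f)"
    using \<open>j < k\<close> by (intro sum_strict_mono_ex1) auto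
  moreover have "(\<Sum>j<Suc k. cost a (Q j) f) = (\<Sum>j<Suc k. M)"
    using Q by (intro sum.cong) auto
  moreover have "M \<le> cost a p f" using min p by blast
  ultimately show False using balance by (simp add: algebra_simps)
qed

lemma used_paths_cover_loaded_path:
  assumes f: "f \<in> feasible_flows P" and pos: "\<forall>e\<in>set p. 0 < load f e"
  obtains Q L where "\<forall>j<length p. Q j \<in> P \<and> 0 < f (Q j) \<and> L j < length (Q j) \<and> Q j ! L j = p ! j"
proof -
  have "\<exists>q l. q \<in> P \<and> 0 < f q \<and> l < length q \<and> q ! l = p ! j" if "j < length p" for j
  proof -
    have "0 < load f (p ! j)" using pos that by simp
    then obtain q where "q \<in> P" "0 < f q" "p ! j \<in> set q"
      by (rule load_pos_imp_used_path[OF f])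
    then show ?thesis by (metis in_set_conv_nth)
  qed
  then show ?thesis using that by metis
qed

text \<open>A path all of whose edges are loaded can be made used without changing any load: splicing used
  paths through its edges yields walks which, by the cost balance, are minimum-cost paths, and flow is
  shifted from the used paths onto the given path and the spliced ones.\<close>

lemma WE_reroute_to_loaded_path:
  assumes a: "a \<in> {0..1}" and f: "f \<in> W a" and p: "p \<in> P" and pos: "\<forall>e\<in>set p. 0 < load f e"
  obtains f' where "f' \<in> W a" "0 < f' p" "\<And>e. load f' e = load f e"
proof (cases "0 < f p")
  case True
  then show ?thesis using f that by blast
next
  case False
  have f_feasible: "f \<in> feasible_flows P" using f by (simp add: WE_def)
  then have "0 \<le> f p" using p by (simp add: feasible_flows_def)
  then have "f p = 0" using False by linarith
  have "p \<noteq> []"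
  proof
    assume "p = []"
    then have "P = {[]}" using od_paths_Nil p by metis
    then show False using f_feasible \<open>f p = 0\<close> \<open>p = []\<close> by (simp add: feasible_flows_def)
  qed
  then obtain k where k: "length p = Suc k" by (cases p) auto
  obtain Q L where QL: "\<forall>j<Suc k. Q j \<in> P \<and> 0 < f (Q j) \<and> L j < length (Q j) \<and> Q j ! L j = p ! j"
    using used_paths_cover_loaded_path[OF f_feasible pos, unfolded k] by blast
  define r where "r j = take (L (Suc j)) (Q (Suc j)) @ drop (Suc (L j)) (Q j)" for j
  note spliced = spliced_walks[OF p k, of Q L, folded r_def]
  have balance: "sum_list (map g p) + (\<Sum>j<k. sum_list (map g (r j))) = (\<Sum>j<Suc k. sum_list (map g (Q j)))"
    for g :: "'e \<Rightarrow> real"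
    using sum_list_splice[OF k _ spliced(2,3), of g] QL unfolding r_def by simp
  obtain M where M: "\<forall>\<pi>\<in>P. f \<pi> > 0 \<longrightarrow> cost a \<pi> f = M" "\<forall>q\<in>P. M \<le> cost a q f"
    using WE_common_cost[OF f] by blast
  have "\<forall>j<k. \<forall>e\<in>set (r j). 0 < load f e"
  proof (intro allI impI ballI)
    fix j e assume "j < k" "e \<in> set (r j)"
    then obtain i where "i < Suc k" "e \<in> set (Q i)"
      unfolding r_def by (metis Suc_mono Un_iff in_set_dropD in_set_takeD less_SucI set_append)
    then show "0 < load f e" using QL flow_le_load[OF f_feasible] by (meson less_le_trans)
  qed
  then have "\<forall>j<k. r j \<in> P"
    using spliced(1) balance[of "\<lambda>e. mixed_cost a e (load f e)"] M QL
    by (intro spliced_walks_in_P[OF a M(2) p, of k Q]) (auto simp: cost_eq_sum_list distrib_right)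
  then obtain f' where "f' \<in> feasible_flows P" "0 < f' p" "\<And>e. load f' e = load f e"
    using reroute_flow[OF f_feasible p \<open>f p = 0\<close> _ _ balance] QL by blast
  then show ?thesis using WE_if_same_loads[OF f] that by blast
qed

lemma WE_positive_on_paths:
  assumes f: "f \<in> W a" and R: "R \<subseteq> P"
    and reroute: "\<forall>\<pi>\<in>R. \<exists>h\<in>W a. 0 < h \<pi> \<and> (\<forall>e. load h e = load f e)"
  obtains g where "g \<in> W a" "\<forall>\<pi>\<in>R. 0 < g \<pi>"
proof (cases "R = {}")
  case True
  then show ?thesis using f that by blast
next
  case False
  obtain F where F: "\<forall>\<pi>\<in>R. F \<pi> \<in> W a \<and> 0 < F \<pi> \<pi> \<and> (\<forall>e. load (F \<pi>) e = load f e)"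
    using bchoice[of R "\<lambda>\<pi> h. h \<in> W a \<and> 0 < h \<pi> \<and> (\<forall>e. load h e = load f e)"] reroute by blast
  have finite_R: "finite R" using finite_P R finite_subset by blast
  define n where "n = real (card R)"
  have n: "0 < n" using False finite_R by (simp add: n_def card_gt_0_iff)
  define g where "g \<rho> = (\<Sum>\<pi>\<in>R. F \<pi> \<rho>) / n" for \<rho>
  have F_feasible: "F \<pi> \<in> feasible_flows P" if "\<pi> \<in> R" for \<pi> using F that by (simp add: WE_def)
  have "(\<Sum>\<rho>\<in>P. g \<rho>) = (\<Sum>\<pi>\<in>R. \<Sum>\<rho>\<in>P. F \<pi> \<rho>) / n"
    unfolding g_def by (simp add: sum.swap[of _ P] flip: sum_divide_distrib)
  also have "\<dots> = 1" using F_feasible n by (simp add: feasible_flows_def n_def)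
  finally have "g \<in> feasible_flows P"
    using F_feasible n by (auto simp: g_def feasible_flows_def intro!: divide_nonneg_pos sum_nonneg)
  moreover have "\<forall>e\<in>E. load g e = load f e"
  proof
    fix e
    have "load g e = (\<Sum>\<pi>\<in>R. load (F \<pi>) e) / n"
      unfolding edge_flow_def g_def
      by (simp add: sum.swap[of _ "{p \<in> P. e \<in> set p}"] flip: sum_divide_distrib)
    then show "load g e = load f e" using F n by (simp add: n_def)
  qed
  ultimately have "g \<in> W a" using WE_if_same_loads[OF f] by blast
  moreover have "0 < g \<pi>" if "\<pi> \<in> R" for \<pi>
  proof -
    have "F \<pi> \<pi> \<le> (\<Sum>\<pi>'\<in>R. F \<pi>' \<pi>)"
      using that finite_R F_feasible R by (intro member_le_sum) (auto simp: feasible_flows_def)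
    moreover have "0 < F \<pi> \<pi>" using F that by blast
    ultimately show ?thesis using n by (simp add: g_def)
  qed
  ultimately show ?thesis using that by blast
qed

end

section \<open>Dependence on the belief\<close>

lemma affine_le_between:
  fixes a b c x y u v :: real
  assumes "a \<le> c" "c \<le> b"
    and "a * x + (1 - a) * y \<le> a * u + (1 - a) * v" and "b * x + (1 - b) * y \<le> b * u + (1 - b) * v"
  shows "c * x + (1 - c) * y \<le> c * u + (1 - c) * v"
proof -
  define h where "h t = (y - v) + t * ((x - u) - (y - v))" for t
  have h: "t * x + (1 - t) * y - (t * u + (1 - t) * v) = h t" for t
    by (simp add: h_def algebra_simps)
  have "h a \<le> 0" "h b \<le> 0" using assms(3,4) h[of a] h[of b] by linarith+
  moreover have "h c \<le> h a \<or> h c \<le> h b"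
  proof (cases "(x - u) - (y - v) \<le> 0")
    case True
    then show ?thesis using assms(1) by (simp add: h_def mult_right_mono_neg)
  next
    case False
    then show ?thesis using assms(2) by (simp add: h_def mult_right_mono)
  qed
  ultimately show ?thesis using h[of c] by linarith
qed

context two_state_network
begin

lemma WE_iff:
  "g \<in> W a \<longleftrightarrow> g \<in> feasible_flows P \<and> (\<forall>\<pi>\<in>P. 0 < g \<pi> \<longrightarrow> (\<forall>r\<in>P.
     a * path_cost C P 1 \<pi> g + (1 - a) * path_cost C P 2 \<pi> g
       \<le> a * path_cost C P 1 r g + (1 - a) * path_cost C P 2 r g))"
  by (simp add: WE_def exp_cost_two_states two_state_dist_def)

lemma WE_between:
  assumes "g \<in> W a" "g \<in> W b" "a \<le> c" "c \<le> b"
  shows "g \<in> W c"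
  using assms affine_le_between[OF assms(3,4)] by (simp add: WE_iff)

lemma closed_WE_params:
  assumes "g \<in> feasible_flows P"
  shows "closed {a. g \<in> W a}"
proof -
  have "{a. g \<in> W a} = (\<Inter>\<pi>\<in>{\<pi>\<in>P. 0 < g \<pi>}. \<Inter>r\<in>P. {a.
     a * path_cost C P 1 \<pi> g + (1 - a) * path_cost C P 2 \<pi> g
       \<le> a * path_cost C P 1 r g + (1 - a) * path_cost C P 2 r g})"
    using assms by (auto simp: WE_iff)
  also have "closed \<dots>"
    by (intro closed_INT ballI closed_Collect_le continuous_intros)
  finally show ?thesis .
qed

text \<open>The parameters sharing an equilibrium set form a closed interval, since they are exactly those for
  which one fixed equilibrium flow remains an equilibrium.\<close>

lemma WE_class_interval:
  assumes c: "c \<in> {0..1}" and "W c \<noteq> {}"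
  obtains lo hi where "{a \<in> {0..1}. W a = W c} = {lo..hi}"
proof -
  obtain g where g: "g \<in> W c" using assms(2) by blast
  define S where "S = {a \<in> {0..1}. W a = W c}"
  have S: "S = {0..1} \<inter> {a. g \<in> W a}"
    using g c WE_eq_if_common_flow unfolding S_def by blast
  have "closed S" unfolding S using g by (intro closed_Int closed_WE_params) (auto simp: WE_def)
  moreover have "S \<noteq> {}" "bdd_below S" "bdd_above S" using c by (auto simp: S_def bdd_below_def bdd_above_def)
  ultimately have "Inf S \<in> S" "Sup S \<in> S"
    by (simp_all add: closed_contains_Inf closed_contains_Sup)
  have "S = {Inf S..Sup S}"
  proof
    show "S \<subseteq> {Inf S..Sup S}"
      using \<open>bdd_below S\<close> \<open>bdd_above S\<close> by (auto intro: cInf_lower cSup_upper)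
    show "{Inf S..Sup S} \<subseteq> S"
    proof
      fix a assume a: "a \<in> {Inf S..Sup S}"
      have "g \<in> W (Inf S)" "g \<in> W (Sup S)" "0 \<le> Inf S" "Sup S \<le> 1"
        using \<open>Inf S \<in> S\<close> \<open>Sup S \<in> S\<close> unfolding S by auto
      then show "a \<in> S" using a WE_between[of g "Inf S" "Sup S" a] unfolding S by auto
    qed
  qed
  then show ?thesis using that unfolding S_def by blast
qed

lemma WE_loads_perturbation_bound:
  assumes a: "a \<in> {0..1}" "a \<le> t" and t: "t \<in> {0..1}" and f: "f \<in> W a" and g: "g \<in> W t"
  shows "(\<Sum>e\<in>E. (load f e - load g e) * (mixed_cost t e (load f e) - mixed_cost t e (load g e)))
           \<le> (t - a) * (\<Sum>e\<in>E. C 1 e 1 + C 2 e 1)"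
proof -
  have f_feasible: "f \<in> feasible_flows P" and g_feasible: "g \<in> feasible_flows P"
    using f g by (simp_all add: WE_def)
  let ?x = "\<lambda>e. load f e" and ?y = "\<lambda>e. load g e"
  let ?d = "\<lambda>e. (?x e - ?y e) * (C 1 e (?x e) - C 2 e (?x e))"
  have "(?x e - ?y e) * (mixed_cost a e (?x e) - mixed_cost t e (?y e))
      = (?x e - ?y e) * (mixed_cost t e (?x e) - mixed_cost t e (?y e)) - (t - a) * ?d e" for e
    by (simp add: mixed_cost_def algebra_simps)
  then have "(\<Sum>e\<in>E. (?x e - ?y e) * (mixed_cost t e (?x e) - mixed_cost t e (?y e))) - (t - a) * (\<Sum>e\<in>E. ?d e)
      = (\<Sum>e\<in>E. (?x e - ?y e) * (mixed_cost a e (?x e) - mixed_cost t e (?y e)))"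
    by (simp add: sum_subtractf sum_distrib_left)
  also have "\<dots> \<le> 0" by (rule WE_variational_inequality[OF f g])
  finally have "(\<Sum>e\<in>E. (?x e - ?y e) * (mixed_cost t e (?x e) - mixed_cost t e (?y e)))
      \<le> (t - a) * (\<Sum>e\<in>E. ?d e)"
    by simp
  also have "\<dots> \<le> (t - a) * (\<Sum>e\<in>E. C 1 e 1 + C 2 e 1)"
  proof (intro mult_left_mono sum_mono)
    fix e assume e: "e \<in> E"
    have x: "0 \<le> ?x e" "?x e \<le> 1" and y: "0 \<le> ?y e" "?y e \<le> 1"
      using load_nonneg load_le_1 f_feasible g_feasible by auto
    have "0 \<le> C s e (?x e)" "C s e (?x e) \<le> C s e 1" if "s \<in> {1,2}" for s
      using C_nonneg[OF that e x(1)] C_mono[OF that e x] by simp_all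
    then have "\<bar>C 1 e (?x e) - C 2 e (?x e)\<bar> \<le> C 1 e 1 + C 2 e 1"
      unfolding abs_le_iff by (smt (verit) insertI1 insert_commute)
    moreover have "\<bar>?x e - ?y e\<bar> \<le> 1" using x y by linarith
    ultimately have "\<bar>?d e\<bar> \<le> 1 * (C 1 e 1 + C 2 e 1)"
      unfolding abs_mult by (intro mult_mono) auto
    then show "?d e \<le> C 1 e 1 + C 2 e 1" by (simp add: abs_le_iff)
  qed (use a in simp)
  finally show ?thesis .
qed

text \<open>Edges loaded at the equilibria for \<open>t\<close> stay loaded for all slightly smaller parameters: a zero load
  there would make a fixed positive summand of the monotonicity sum exceed its \<open>O(t - a)\<close> bound.\<close>

lemma WE_loads_positive_below:
  assumes t: "t \<in> {0..1}" and g: "g \<in> W t"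
  obtains \<delta> where "0 < \<delta>"
    and "\<And>a f e. a \<in> {0..1} \<Longrightarrow> t - \<delta> < a \<Longrightarrow> a \<le> t \<Longrightarrow> f \<in> W a \<Longrightarrow> e \<in> E \<Longrightarrow> 0 < load g e
           \<Longrightarrow> 0 < load f e"
proof -
  define K where "K = (\<Sum>e\<in>E. C 1 e 1 + C 2 e 1)"
  have "0 \<le> K" unfolding K_def using C_nonneg by (intro sum_nonneg add_nonneg_nonneg) auto
  define d where "d e = load g e * (mixed_cost t e (load g e) - mixed_cost t e 0)" for e
  have d_pos: "0 < d e" if "e \<in> E" "0 < load g e" for e
    using mixed_cost_strict_mono[OF t that(1) _ that(2)] that(2) by (simp add: d_def)
  define D where "D = Min (insert 1 (d ` {e \<in> E. 0 < load g e}))"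
  have D: "0 < D" "\<And>e. e \<in> E \<Longrightarrow> 0 < load g e \<Longrightarrow> D \<le> d e"
    using finite_edges d_pos by (auto simp: D_def)
  define \<delta> where "\<delta> = D / (K + 1)"
  have "0 < \<delta>" using D(1) \<open>0 \<le> K\<close> by (simp add: \<delta>_def)
  moreover have "0 < load f e"
    if a: "a \<in> {0..1}" "t - \<delta> < a" "a \<le> t" and f: "f \<in> W a" and e: "e \<in> E" "0 < load g e" for a f e
  proof (rule ccontr)
    assume "\<not> 0 < load f e"
    have f_feasible: "f \<in> feasible_flows P" and g_feasible: "g \<in> feasible_flows P"
      using f g by (simp_all add: WE_def)
    then have "load f e = 0" using \<open>\<not> 0 < load f e\<close> load_nonneg[OF f_feasible, of e] by simp
    let ?term = "\<lambda>e. (load f e - load g e) * (mixed_cost t e (load f e) - mixed_cost t e (load g e))"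
    have "d e = ?term e" using \<open>load f e = 0\<close> by (simp add: d_def algebra_simps)
    also have "\<dots> \<le> (\<Sum>e\<in>E. ?term e)"
      using e finite_edges load_cost_product_nonneg[OF t _ f_feasible g_feasible]
      by (intro member_le_sum) auto
    also have "\<dots> \<le> (t - a) * K"
      unfolding K_def using WE_loads_perturbation_bound[OF _ _ t f g] a by simp
    also have "\<dots> \<le> (t - a) * (K + 1)" using a by (intro mult_left_mono) auto
    also have "\<dots> < \<delta> * (K + 1)" using a \<open>0 \<le> K\<close> by (intro mult_strict_right_mono) auto
    also have "\<dots> = D" using \<open>0 \<le> K\<close> by (simp add: \<delta>_def)
    finally show False using D(2)[OF e] by simp
  qed
  ultimately show ?thesis using that by blast
qed

lemma WE_point_dist: "WE 2 C P (point_dist 1) = W 1" "WE 2 C P (point_dist 2) = W 0"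
  by (simp_all only: point_dist_eq_two_state_dist)

lemma WE_nonempty:
  assumes "W 1 \<noteq> W 0" "b \<in> {0..1}"
  shows "W b \<noteq> {}"
proof -
  have "P \<noteq> {}"
  proof
    assume "P = {}"
    then have "feasible_flows P = {}" by (simp add: feasible_flows_def)
    then show False using assms(1) by (simp add: WE_def)
  qed
  then show ?thesis using WE_exists[OF assms(2)] by blast
qed

lemma WE_thresholds:
  assumes "W 1 \<noteq> W 0"
  obtains s t where "0 \<le> s" "s < t" "t \<le> 1"
    and "\<And>b. b \<in> {t..1} \<Longrightarrow> W b = W 1" and "\<And>a. a \<in> {0..<t} \<Longrightarrow> W a \<noteq> W 1"
    and "\<And>a. a \<in> {s<..1} \<Longrightarrow> W a \<noteq> W 0"
proof -
  obtain t hi where class1: "{a \<in> {0..1}. W a = W 1} = {t..hi}"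
    using WE_class_interval[of 1] WE_nonempty[OF assms] by auto
  obtain lo s where class0: "{a \<in> {0..1}. W a = W 0} = {lo..s}"
    using WE_class_interval[of 0] WE_nonempty[OF assms] by auto
  have class1_iff: "a \<in> {t..hi} \<longleftrightarrow> a \<in> {0..1} \<and> W a = W 1" for a using class1 by blast
  have class0_iff: "a \<in> {lo..s} \<longleftrightarrow> a \<in> {0..1} \<and> W a = W 0" for a using class0 by blast
  have t: "t \<le> 1" "1 \<le> hi" using class1_iff[of 1] by auto
  have "0 < t"
  proof (rule ccontr)
    assume "\<not> 0 < t"
    then have "W 0 = W 1" using class1_iff[of 0] t by auto
    then show False using assms by simp
  qed
  have s: "lo \<le> 0" "0 \<le> s" using class0_iff[of 0] by auto
  have "s < t"
  proof (rule ccontr)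
    assume "\<not> s < t"
    then have "W t = W 0" "W t = W 1"
      using class0_iff[of t] class1_iff[of t] t s \<open>0 < t\<close> by auto
    then show False using assms by simp
  qed
  show ?thesis
  proof (rule that[OF s(2) \<open>s < t\<close> t(1)])
    show "W b = W 1" if "b \<in> {t..1}" for b using that class1_iff[of b] t by auto
    show "W a \<noteq> W 1" if "a \<in> {0..<t}" for a using that class1_iff[of a] t by auto
    show "W a \<noteq> W 0" if "a \<in> {s<..1}" for a using that class0_iff[of a] s by auto
  qed
qed

lemma informative_WE_exists:
  assumes a: "a \<in> {0..1}" and "W a \<noteq> {}" "W a \<noteq> W 1" "W a \<noteq> W 0"
    and loaded: "\<And>f g e. f \<in> W a \<Longrightarrow> g \<in> W 1 \<Longrightarrow> e \<in> E \<Longrightarrow> 0 < load g e \<Longrightarrow> 0 < load f e"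
  obtains f where "f \<in> W a" "f \<in> F_inf C P"
proof -
  obtain f where f: "f \<in> W a" using assms(2) by blast
  let ?R = "R_use 2 C P (point_dist 1)"
  have "\<forall>\<pi>\<in>?R. \<exists>h\<in>W a. 0 < h \<pi> \<and> (\<forall>e. load h e = load f e)"
  proof
    fix \<pi> assume "\<pi> \<in> ?R"
    then obtain g where \<pi>: "\<pi> \<in> P" and g: "g \<in> W 1" "0 < g \<pi>"
      unfolding R_use_def WE_point_dist by blast
    have "0 < load f e" if "e \<in> set \<pi>" for e
    proof (rule loaded[OF f g(1)])
      show "e \<in> E" using od_pathD(4)[OF \<pi>] that by blast
      show "0 < load g e"
        using flow_le_load[of g \<pi> e] g \<pi> that by (force simp: WE_def)
    qed
    then show "\<exists>h\<in>W a. 0 < h \<pi> \<and> (\<forall>e. load h e = load f e)"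
      using WE_reroute_to_loaded_path[OF a f \<pi>] by metis
  qed
  moreover have "?R \<subseteq> P" by (auto simp: R_use_def)
  ultimately obtain f' where f': "f' \<in> W a" "\<forall>\<pi>\<in>?R. 0 < f' \<pi>"
    using WE_positive_on_paths[OF f] by metis
  have "f' \<notin> W b" if "b \<in> {0, 1}" "W a \<noteq> W b" for b
    using that WE_eq_if_common_flow[OF a, of b f'] f'(1) by auto
  then have "f' \<in> F_inf C P"
    using f' assms(3,4) unfolding F_inf_def WE_point_dist by (auto simp: WE_def)
  then show ?thesis using f'(1) that by blast
qed

lemma informative_segment:
  assumes distinct: "W 1 \<noteq> W 0"
  shows "\<exists>\<xi> \<eta>. \<xi> \<in> prob_simplex 2 \<and> \<eta> \<in> prob_simplex 2 \<and> \<xi> \<noteq> \<eta> \<and> \<xi> 1 > \<eta> 1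
     \<and> (\<forall>\<mu>\<in>{0..1}. WE 2 C P (\<lambda>i. \<mu> * point_dist 1 i + (1 - \<mu>) * \<xi> i) = WE 2 C P (point_dist 1))
     \<and> (\<forall>lam\<in>{0<..<1}. \<exists>f \<in> WE 2 C P (\<lambda>i. lam * \<xi> i + (1 - lam) * \<eta> i). f \<in> F_inf C P)"
proof -
  obtain s t where st: "0 \<le> s" "s < t" "t \<le> 1"
    and above_t: "\<And>b. b \<in> {t..1} \<Longrightarrow> W b = W 1" and below_t: "\<And>a. a \<in> {0..<t} \<Longrightarrow> W a \<noteq> W 1"
    and above_s: "\<And>a. a \<in> {s<..1} \<Longrightarrow> W a \<noteq> W 0"
    by (rule WE_thresholds[OF distinct], rule that)
  have "W 1 \<noteq> {}" by (rule WE_nonempty[OF distinct]) simp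
  then obtain f1 where f1: "f1 \<in> W 1" by blast
  moreover have "W t = W 1" using st by (intro above_t) auto
  ultimately have "f1 \<in> W t" by simp
  then obtain \<delta> where "0 < \<delta>" and near_t: "\<And>a f e. a \<in> {0..1} \<Longrightarrow> t - \<delta> < a \<Longrightarrow> a \<le> t \<Longrightarrow> f \<in> W a
      \<Longrightarrow> e \<in> E \<Longrightarrow> 0 < load f1 e \<Longrightarrow> 0 < load f e"
    using WE_loads_positive_below[of t f1] st by auto
  define r where "r = max s (t - \<delta> / 2)"
  have r: "s \<le> r" "t - \<delta> < r" "r < t" using st \<open>0 < \<delta>\<close> by (auto simp: r_def)
  define \<xi> where "\<xi> = two_state_dist t"
  define \<eta> where "\<eta> = two_state_dist r"
  have "\<forall>\<mu>\<in>{0..1}. WE 2 C P (\<lambda>i. \<mu> * point_dist 1 i + (1 - \<mu>) * \<xi> i) = WE 2 C P (point_dist 1)"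
  proof
    fix \<mu> :: real assume "\<mu> \<in> {0..1}"
    have "WE 2 C P (\<lambda>i. \<mu> * point_dist 1 i + (1 - \<mu>) * \<xi> i) = W (\<mu> * 1 + (1 - \<mu>) * t)"
      unfolding \<xi>_def point_dist_eq_two_state_dist mix_two_state_dist ..
    also have "\<dots> = W 1"
      using convex_comb_mem_interval(1)[of t 1 \<mu>] \<open>\<mu> \<in> {0..1}\<close> st by (intro above_t) auto
    finally show "WE 2 C P (\<lambda>i. \<mu> * point_dist 1 i + (1 - \<mu>) * \<xi> i) = WE 2 C P (point_dist 1)"
      unfolding WE_point_dist .
  qed
  moreover have "\<forall>lam\<in>{0<..<1}. \<exists>f \<in> WE 2 C P (\<lambda>i. lam * \<xi> i + (1 - lam) * \<eta> i). f \<in> F_inf C P"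
  proof
    fix lam :: real assume "lam \<in> {0<..<1}"
    define a where "a = lam * t + (1 - lam) * r"
    have "WE 2 C P (\<lambda>i. lam * \<xi> i + (1 - lam) * \<eta> i) = W a"
      unfolding \<xi>_def \<eta>_def mix_two_state_dist a_def ..
    moreover have "r < a" "a < t"
      using convex_comb_mem_interval(2)[of r t lam] \<open>lam \<in> {0<..<1}\<close> r(3) by (auto simp: a_def)
    then have a: "a \<in> {0..1}" "a \<in> {0..<t}" "a \<in> {s<..1}" using r st by auto
    have "0 < load f e" if "f \<in> W a" "g \<in> W 1" "e \<in> E" "0 < load g e" for f g e
    proof (rule near_t[OF a(1) _ _ that(1,3)])
      show "t - \<delta> < a" "a \<le> t" using r(2) \<open>r < a\<close> \<open>a < t\<close> by simp_all
      show "0 < load f1 e" using WE_loads_unique[of 1 g f1 e] that f1 by simp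
    qed
    then obtain f where "f \<in> W a" "f \<in> F_inf C P"
      using informative_WE_exists[OF a(1) WE_nonempty[OF distinct a(1)] below_t[OF a(2)] above_s[OF a(3)]]
      by blast
    ultimately show "\<exists>f \<in> WE 2 C P (\<lambda>i. lam * \<xi> i + (1 - lam) * \<eta> i). f \<in> F_inf C P" by blast
  qed
  moreover have "\<xi> \<in> prob_simplex 2" "\<eta> \<in> prob_simplex 2" "\<eta> 1 < \<xi> 1"
    using st r by (auto simp: \<xi>_def \<eta>_def intro!: two_state_dist_simplex) (simp add: two_state_dist_def)
  ultimately show ?thesis by (intro exI[of _ \<xi>] exI[of _ \<eta>]) auto
qed

end

theorem lemma6:
  fixes src dst :: "'e \<Rightarrow> 'v" and E :: "'e set" and vo vd :: 'v
    and C :: "nat \<Rightarrow> 'e \<Rightarrow> real \<Rightarrow> real"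
  assumes "finite E"
    and "\<forall>s\<in>{1,2}. \<forall>e\<in>E. continuous_on {0..} (C s e)
            \<and> strict_mono_on {0..} (C s e) \<and> (\<forall>x\<ge>0. C s e x \<ge> 0)"
    and "WE 2 C (od_paths src dst E vo vd) (point_dist 1)
           \<noteq> WE 2 C (od_paths src dst E vo vd) (point_dist 2)"
  shows "\<exists>\<xi> \<eta>. \<xi> \<in> prob_simplex 2 \<and> \<eta> \<in> prob_simplex 2 \<and> \<xi> \<noteq> \<eta> \<and> \<xi> 1 > \<eta> 1
     \<and> (\<forall>\<mu>\<in>{0..1}.
          WE 2 C (od_paths src dst E vo vd) (\<lambda>i. \<mu> * point_dist 1 i + (1 - \<mu>) * \<xi> i)
          = WE 2 C (od_paths src dst E vo vd) (point_dist 1))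
     \<and> (\<forall>lam\<in>{0<..<1}. \<exists>f \<in> WE 2 C (od_paths src dst E vo vd) (\<lambda>i. lam * \<xi> i + (1 - lam) * \<eta> i).
          f \<in> F_inf C (od_paths src dst E vo vd))"
proof -
  interpret two_state_network src dst E vo vd C
    using assms(1,2) by unfold_locales
  have "W 1 \<noteq> W 0" using assms(3) unfolding WE_point_dist .
  then show ?thesis by (rule informative_segment)
qed

end
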